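(* Let $m\ge1$ be an integer and for each $s\in(0,m)$ let $\sigma_s$ be a Borel probability measure on $\mathbb S^{N-1}$. Then $$\lim_{s\to m^-}\frac{c_{m,s}}{m-s}M_{s,\sigma_s}(e_s)=4.$$
   Context: $\nu_s(U)=\int_0^\infty\int_{\mathbb S^{N-1}}\chi_U(r\theta)r^{-1-2s}\sigma_s(d\theta)\,dr$; $M_{s,\sigma}(e)=\int|e\cdot\theta|^{2s}\sigma(d\theta)$; $e_s$ is a maximum point of $M_{s,\sigma_s}$ on $\mathbb S^{N-1}$; for an integer $m>s$, $c_{m,s}>0$ is defined by $\frac2{c_{m,s}}=2^m\int_{\mathbb R^N}(1-\cos(e_s\cdot y))^m\nu_s(dy)$. *)

theory Defs
  imports "HOL-Probability.Probability"
begin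

text \<open>The unit sphere S^{N-1} in the Euclidean space 'a (of dimension N = DIM('a)).\<close>
abbreviation unit_sphere :: "'a::euclidean_space set" where
  "unit_sphere \<equiv> sphere 0 1"

definition borel_prob_on_sphere :: "'a::euclidean_space measure \<Rightarrow> bool" where
  "borel_prob_on_sphere \<sigma> \<longleftrightarrow>
     prob_space \<sigma> \<and> sets \<sigma> = sets (restrict_space borel (unit_sphere :: 'a set))"

text \<open>nu_s(U) = int_0^infty int_S chi_U(r theta) r^(-1-2s) sigma(d theta) dr,
  realised as the push-forward of (r^(-1-2s) dr on (0,infty)) x sigma under (r,theta) -> r theta.\<close>
definition nu_meas :: "real \<Rightarrow> 'a::euclidean_space measure \<Rightarrow> 'a measure" where
  "nu_meas s \<sigma> =
     distr ((density (restrict_space lborel {0<..}) (\<lambda>r. ennreal (r powr (- 1 - 2 * s)))) \<Otimes>\<^sub>M \<sigma>)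
           borel (\<lambda>(r, \<theta>). r *\<^sub>R \<theta>)"

definition M_fun :: "real \<Rightarrow> 'a::euclidean_space measure \<Rightarrow> 'a \<Rightarrow> real" where
  "M_fun s \<sigma> e = (\<integral>\<theta>. \<bar>e \<bullet> \<theta>\<bar> powr (2 * s) \<partial>\<sigma>)"

definition c_const :: "nat \<Rightarrow> real \<Rightarrow> 'a::euclidean_space measure \<Rightarrow> 'a \<Rightarrow> real" where
  "c_const m s \<sigma> e = 2 / (2^m * (\<integral>y. (1 - cos (e \<bullet> y))^m \<partial>(nu_meas s \<sigma>)))"

end

(* Polar coordinates write nu_s as the push-forward of (r^(-1-2s) dr) x sigma_s, and the substitution
   r -> r |e . theta| gives

     int (1 - cos (e . y))^m d nu_s(y) = K_m(s) M_{s,sigma_s}(e),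
     K_m(s) = int_0^oo (1 - cos r)^m r^(-1-2s) dr,

   so c_{m,s} M(e_s) / (m - s) = 2 / (2^m (m - s) K_m(s)), where M(e_s) > 0 because e_s maximises M.
   Near 0 the integrand of K_m(s) is (r^2/2)^m r^(-1-2s) up to a factor 1 + O(r^2), and
   int_0^delta r^(2(m-s)-1) dr = delta^(2(m-s)) / (2(m-s)) blows up like 1 / (2(m-s)), while the
   integral over [1, oo) stays bounded. Hence (m - s) K_m(s) -> 2^-(m+1), and the limit is
   2 * 2^(m+1) / 2^m = 4. *)

theory Submission
  imports Defs
begin

lemma one_minus_cos_le_half_sq: "1 - cos x \<le> x\<^sup>2 / 2" for x :: real
proof -
  have "1 - cos x = 2 * (sin (x / 2))\<^sup>2"
    using cos_double_sin[of "x / 2"] by simp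
  also have "\<dots> \<le> 2 * (x / 2)\<^sup>2"
    using abs_le_square_iff[THEN iffD1, OF abs_sin_x_le_abs_x[of "x / 2"]] by simp
  finally show ?thesis
    by (simp add: power_divide)
qed

lemma cos_le_quartic_Taylor: "cos x \<le> 1 - x\<^sup>2 / 2 + x ^ 4 / 24" for x :: real
proof -
  obtain t where t: "cos x = (\<Sum>k<4. cos_coeff k * x ^ k) + cos (t + 1 / 2 * real 4 * pi) / fact 4 * x ^ 4"
    using Maclaurin_cos_expansion[of x 4] by blast
  have "(\<Sum>k<4. cos_coeff k * x ^ k) = 1 - x\<^sup>2 / 2"
    by (simp add: eval_nat_numeral cos_coeff_def) presburger
  moreover have "cos (t + 1 / 2 * real 4 * pi) / fact 4 * x ^ 4 \<le> 1 / fact 4 * x ^ 4"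
    by (intro mult_right_mono divide_right_mono) simp_all
  ultimately show ?thesis
    using t by (simp add: fact_numeral)
qed

lemma nn_integral_powr_from_0:
  assumes "-1 < a" "0 \<le> c"
  shows "(\<integral>\<^sup>+ r \<in> {0..c}. ennreal (r powr a) \<partial>lborel) = ennreal (c powr (a + 1) / (a + 1))"
  using assms by (intro nn_integral_has_integral_lebesgue' has_integral_powr_from_0) auto

lemma nn_integral_powr_to_inf:
  assumes "a < -1"
  shows "(\<integral>\<^sup>+ r \<in> {1..}. ennreal (r powr a) \<partial>lborel) = ennreal (- 1 / (a + 1))"
  using assms has_integral_powr_to_inf[of a 1] by (intro nn_integral_has_integral_lebesgue') auto

lemma tendsto_powr_self_at_right_0: "((\<lambda>x::real. x powr x) \<longlongrightarrow> 1) (at_right 0)"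
proof -
  have "((\<lambda>x::real. exp (- (ln x / x))) \<longlongrightarrow> exp (- 0)) at_top"
    by (intro tendsto_exp tendsto_minus ln_x_over_x_tendsto_0)
  moreover have "\<forall>\<^sub>F x in at_top. exp (- (ln x / x)) = inverse x powr inverse (x::real)"
    using eventually_gt_at_top[of "0::real"]
    by eventually_elim (simp add: powr_def ln_inverse divide_inverse mult.commute)
  ultimately have "((\<lambda>x::real. inverse x powr inverse x) \<longlongrightarrow> 1) at_top"
    by (simp add: tendsto_cong)
  then show ?thesis
    by (simp add: filterlim_at_right_to_top)
qed

lemma powr_mult_half_sq_power:
  assumes "0 < r"
  shows "r powr a * (r\<^sup>2 / 2) ^ m = r powr (a + 2 * real m) / 2 ^ m"
  using assms powr_realpow[of r "2 * m"] by (simp add: power_divide powr_add flip: power_mult)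

lemma powr_mult_one_minus_cos_power_le:
  assumes "0 < r"
  shows "r powr a * (1 - cos r) ^ m \<le> r powr (a + 2 * real m) / 2 ^ m"
proof -
  have "(1 - cos r) ^ m \<le> (r\<^sup>2 / 2) ^ m"
    by (intro power_mono one_minus_cos_le_half_sq) simp
  then have "r powr a * (1 - cos r) ^ m \<le> r powr a * (r\<^sup>2 / 2) ^ m"
    by (intro mult_left_mono) simp_all
  with assms show ?thesis
    by (simp add: powr_mult_half_sq_power)
qed

lemma powr_mult_one_minus_cos_power_ge:
  assumes "0 < r" "r \<le> \<delta>" "\<delta>\<^sup>2 \<le> 12"
  shows "(1 - \<delta>\<^sup>2 / 12) ^ m * (r powr (a + 2 * real m) / 2 ^ m) \<le> r powr a * (1 - cos r) ^ m"
proof -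
  have "(1 - \<delta>\<^sup>2 / 12) * (r\<^sup>2 / 2) \<le> (1 - r\<^sup>2 / 12) * (r\<^sup>2 / 2)"
    using assms by (intro mult_right_mono power_mono) auto
  also have "\<dots> \<le> 1 - cos r"
    using cos_le_quartic_Taylor[of r] by (simp add: power2_eq_square power4_eq_xxxx field_simps)
  finally have "((1 - \<delta>\<^sup>2 / 12) * (r\<^sup>2 / 2)) ^ m \<le> (1 - cos r) ^ m"
    using assms by (intro power_mono) simp_all
  then have "r powr a * ((1 - \<delta>\<^sup>2 / 12) ^ m * (r\<^sup>2 / 2) ^ m) \<le> r powr a * (1 - cos r) ^ m"
    unfolding power_mult_distrib by (intro mult_left_mono) simp_all
  with assms(1) show ?thesis
    by (simp add: mult.left_commute[of "r powr a"] powr_mult_half_sq_power)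
qed

definition radial_measure :: "real \<Rightarrow> real measure" where
  "radial_measure s = density (restrict_space lborel {0<..}) (\<lambda>r. ennreal (r powr (- 1 - 2 * s)))"

lemma nu_meas_eq_distr_radial_measure:
  "nu_meas s \<sigma> = distr (radial_measure s \<Otimes>\<^sub>M \<sigma>) borel (\<lambda>(r, \<theta>). r *\<^sub>R \<theta>)"
  by (simp add: nu_meas_def radial_measure_def)

lemma borel_measurable_radial_measure:
  "f \<in> borel_measurable borel \<Longrightarrow> f \<in> borel_measurable (radial_measure s)"
  unfolding radial_measure_def
  by (subst measurable_cong_sets[of _ "restrict_space lborel {0<..}"])
     (auto intro: measurable_restrict_space1)

lemma sigma_finite_radial_measure: "sigma_finite_measure (radial_measure s)"
proof -
  have "sigma_finite_measure (restrict_space lborel ({0<..} :: real set))"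
    by (rule sigma_finite_measure_restrict_space[OF sigma_finite_lborel]) simp
  then show ?thesis
    unfolding radial_measure_def
    by (subst sigma_finite_measure.sigma_finite_iff_density_finite)
       (auto intro: measurable_restrict_space1)
qed

lemma nn_integral_radial_measure:
  assumes "f \<in> borel_measurable borel"
  shows "(\<integral>\<^sup>+ r. f r \<partial>radial_measure s)
    = (\<integral>\<^sup>+ r \<in> {0<..}. ennreal (r powr (- 1 - 2 * s)) * f r \<partial>lborel)"
  unfolding radial_measure_def using assms
  by (simp add: nn_integral_density nn_integral_restrict_space measurable_restrict_space1)

lemma nn_integral_radial_measure_scale:
  assumes f: "f \<in> borel_measurable borel" and c: "0 < c"
  shows "(\<integral>\<^sup>+ r. f (c * r) \<partial>radial_measure s) = ennreal (c powr (2 * s)) * (\<integral>\<^sup>+ r. f r \<partial>radial_measure s)"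
proof -
  have fc: "(\<lambda>r. f (c * r)) \<in> borel_measurable borel"
    using f by measurable
  have ind: "indicator {0<..} (c * r) = (indicator {0<..} r :: ennreal)" for r
    using c by (simp add: indicator_def zero_less_mult_iff)
  have "(\<integral>\<^sup>+ r. f r \<partial>radial_measure s)
      = ennreal c * (\<integral>\<^sup>+ r \<in> {0<..}. ennreal ((c * r) powr (- 1 - 2 * s)) * f (c * r) \<partial>lborel)"
    using nn_integral_real_affine[of "\<lambda>r. ennreal (r powr (- 1 - 2 * s)) * f r * indicator {0<..} r" c 0] f c
    by (simp add: nn_integral_radial_measure ind)
  also have "\<dots> = ennreal c * (ennreal (c powr (- 1 - 2 * s)) *
      (\<integral>\<^sup>+ r \<in> {0<..}. ennreal (r powr (- 1 - 2 * s)) * f (c * r) \<partial>lborel))"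
  proof -
    have "ennreal ((c * r) powr (- 1 - 2 * s)) * f (c * r) * indicator {0<..} r
        = ennreal (c powr (- 1 - 2 * s)) * (ennreal (r powr (- 1 - 2 * s)) * f (c * r) * indicator {0<..} r)"
      for r
      using c by (cases "0 < r") (simp_all add: powr_mult ennreal_mult mult_ac)
    moreover have "(\<lambda>r. ennreal (r powr (- 1 - 2 * s)) * f (c * r) * indicator {0<..} r) \<in> borel_measurable borel"
      using f by measurable
    ultimately show ?thesis
      by (simp add: nn_integral_cmult)
  qed
  also have "\<dots> = ennreal (c * c powr (- 1 - 2 * s)) * (\<integral>\<^sup>+ r. f (c * r) \<partial>radial_measure s)"
    using c by (simp add: nn_integral_radial_measure[OF fc] ennreal_mult mult.assoc)
  also have "c * c powr (- 1 - 2 * s) = c powr (- 2 * s)"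
    using c powr_add[of c 1 "- 1 - 2 * s"] by simp
  finally show ?thesis
    using c by (simp add: ennreal_mult'[symmetric] powr_add[symmetric] mult.assoc[symmetric])
qed

definition cos_kernel_integral :: "nat \<Rightarrow> real \<Rightarrow> ennreal" where
  "cos_kernel_integral m s = (\<integral>\<^sup>+ r. ennreal ((1 - cos r) ^ m) \<partial>radial_measure s)"

lemma nn_integral_radial_measure_one_minus_cos:
  assumes "m \<ge> 1"
  shows "(\<integral>\<^sup>+ r. ennreal ((1 - cos (r * a)) ^ m) \<partial>radial_measure s)
    = ennreal (\<bar>a\<bar> powr (2 * s)) * cos_kernel_integral m s"
proof (cases "a = 0")
  case True
  then show ?thesis
    using assms by simp
next
  case False
  have "cos (r * a) = cos (\<bar>a\<bar> * r)" for r
    by (cases "a \<ge> 0") (simp_all add: mult.commute)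
  then show ?thesis
    using nn_integral_radial_measure_scale[of "\<lambda>r. ennreal ((1 - cos r) ^ m)" "\<bar>a\<bar>" s] False
    by (simp add: cos_kernel_integral_def)
qed

lemma cos_kernel_integral_eq_lborel:
  "cos_kernel_integral m s
    = (\<integral>\<^sup>+ r \<in> {0<..}. ennreal (r powr (- 1 - 2 * s) * (1 - cos r) ^ m) \<partial>lborel)"
  unfolding cos_kernel_integral_def
  by (subst nn_integral_radial_measure) (auto simp: ennreal_mult intro!: nn_integral_cong)

lemma cos_kernel_integral_le:
  assumes "0 < s" "s < real m"
  shows "cos_kernel_integral m s \<le> ennreal (1 / (2 ^ (m + 1) * (real m - s)) + 2 ^ m / (2 * s))"
proof -
  let ?a = "2 * (real m - s) - 1" and ?b = "- 1 - 2 * s"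
  have pointwise: "ennreal (r powr ?b * (1 - cos r) ^ m) * indicator {0<..} r
      \<le> ennreal (1 / 2 ^ m) * (ennreal (r powr ?a) * indicator {0..1} r)
        + ennreal (2 ^ m) * (ennreal (r powr ?b) * indicator {1..} r)" for r
  proof (cases "0 < r")
    case r: True
    show ?thesis
    proof (cases "r \<le> 1")
      case True
      have "r powr ?b * (1 - cos r) ^ m \<le> 1 / 2 ^ m * r powr ?a"
        using powr_mult_one_minus_cos_power_le[OF r, of ?b m] by (simp add: algebra_simps)
      then show ?thesis
        using r True by (simp add: add_increasing2 ennreal_leI flip: ennreal_mult)
    next
      case False
      have "(1 - cos r) ^ m \<le> 2 ^ m"
        by (intro power_mono) (use cos_ge_minus_one[of r] in auto)
      then have "r powr ?b * (1 - cos r) ^ m \<le> 2 ^ m * r powr ?b"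
        using mult_right_mono[OF _ powr_ge_zero[of r ?b]] by (simp only: mult.commute)
      then show ?thesis
        using r False by (simp add: ennreal_leI flip: ennreal_mult)
    qed
  qed simp
  have "cos_kernel_integral m s
      \<le> (\<integral>\<^sup>+ r. ennreal (1 / 2 ^ m) * (ennreal (r powr ?a) * indicator {0..1} r)
        + ennreal (2 ^ m) * (ennreal (r powr ?b) * indicator {1..} r) \<partial>lborel)"
    unfolding cos_kernel_integral_eq_lborel by (intro nn_integral_mono pointwise)
  also have "\<dots> = ennreal (1 / 2 ^ m) * ennreal (1 / (2 * (real m - s)))
      + ennreal (2 ^ m) * ennreal (1 / (2 * s))"
    using assms
    by (simp add: nn_integral_add nn_integral_cmult nn_integral_powr_from_0 nn_integral_powr_to_inf)
  also have "\<dots> = ennreal (1 / (2 ^ (m + 1) * (real m - s)) + 2 ^ m / (2 * s))"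
    using assms by (simp add: ennreal_plus ennreal_mult'' flip: ennreal_mult)
  finally show ?thesis .
qed

lemma cos_kernel_integral_ge:
  assumes "0 < \<delta>" "\<delta>\<^sup>2 \<le> 12" "s < real m"
  shows "ennreal ((1 - \<delta>\<^sup>2 / 12) ^ m * \<delta> powr (2 * (real m - s)) / (2 ^ (m + 1) * (real m - s)))
    \<le> cos_kernel_integral m s"
proof -
  let ?a = "2 * (real m - s) - 1" and ?b = "- 1 - 2 * s" and ?k = "(1 - \<delta>\<^sup>2 / 12) ^ m / 2 ^ m"
  have pointwise: "ennreal ?k * (ennreal (r powr ?a) * indicator {0..\<delta>} r)
      \<le> ennreal (r powr ?b * (1 - cos r) ^ m) * indicator {0<..} r" for r
  proof (cases "0 < r \<and> r \<le> \<delta>")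
    case True
    then have "?k * r powr ?a \<le> r powr ?b * (1 - cos r) ^ m"
      using powr_mult_one_minus_cos_power_ge[of r \<delta> m ?b] assms by (simp add: algebra_simps)
    with True assms show ?thesis
      by (simp add: ennreal_leI flip: ennreal_mult)
  qed (auto simp: indicator_def)
  have "ennreal ((1 - \<delta>\<^sup>2 / 12) ^ m * \<delta> powr (2 * (real m - s)) / (2 ^ (m + 1) * (real m - s)))
      = ennreal ?k * ennreal (\<delta> powr (?a + 1) / (?a + 1))"
    using assms by (simp add: field_simps flip: ennreal_mult)
  also have "\<dots> = (\<integral>\<^sup>+ r. ennreal ?k * (ennreal (r powr ?a) * indicator {0..\<delta>} r) \<partial>lborel)"
    using assms by (simp add: nn_integral_cmult nn_integral_powr_from_0)
  also have "\<dots> \<le> cos_kernel_integral m s"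
    unfolding cos_kernel_integral_eq_lborel by (intro nn_integral_mono pointwise)
  finally show ?thesis .
qed

text \<open>The lower bound takes \<open>\<delta> = m - s\<close> in \<open>cos_kernel_integral_ge\<close>: then both
  \<open>(1 - \<delta>\<^sup>2 / 12) ^ m\<close> and \<open>\<delta> powr (2 * (m - s))\<close> tend to 1 as \<open>s \<rightarrow> m\<close>.\<close>

lemma cos_kernel_integral_bounds:
  assumes s: "0 < s" "s < real m" "(real m - s)\<^sup>2 \<le> 12"
  shows "(1 - (real m - s)\<^sup>2 / 12) ^ m * ((real m - s) powr (real m - s))\<^sup>2 / 2 ^ (m + 1)
      \<le> (real m - s) * enn2real (cos_kernel_integral m s)"
    and "(real m - s) * enn2real (cos_kernel_integral m s)
      \<le> 1 / 2 ^ (m + 1) + (real m - s) * 2 ^ m / (2 * s)"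
proof -
  let ?K = "cos_kernel_integral m s"
  let ?L = "(1 - (real m - s)\<^sup>2 / 12) ^ m * (real m - s) powr (2 * (real m - s))
    / (2 ^ (m + 1) * (real m - s))"
  let ?U = "1 / (2 ^ (m + 1) * (real m - s)) + 2 ^ m / (2 * s)"
  have le: "?K \<le> ennreal ?U"
    using s(1,2) by (rule cos_kernel_integral_le)
  have "?L \<le> enn2real ?K"
    using enn2real_mono[OF cos_kernel_integral_ge le_less_trans[OF le ennreal_less_top]] s by simp
  moreover have "(real m - s) powr (2 * (real m - s)) = ((real m - s) powr (real m - s))\<^sup>2"
    by (simp only: mult_2 powr_add power2_eq_square)
  ultimately show "(1 - (real m - s)\<^sup>2 / 12) ^ m * ((real m - s) powr (real m - s))\<^sup>2 / 2 ^ (m + 1)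
      \<le> (real m - s) * enn2real ?K"
    using s mult_left_mono[of ?L "enn2real ?K" "real m - s"] by simp
  have "enn2real ?K \<le> ?U"
    using le s by (intro enn2real_leI) auto
  then show "(real m - s) * enn2real ?K \<le> 1 / 2 ^ (m + 1) + (real m - s) * 2 ^ m / (2 * s)"
    using s mult_left_mono[of "enn2real ?K" ?U "real m - s"] by (simp add: field_simps)
qed

lemma tendsto_cos_kernel_integral:
  assumes "m \<ge> 1"
  shows "((\<lambda>s. (real m - s) * enn2real (cos_kernel_integral m s)) \<longlongrightarrow> 1 / 2 ^ (m + 1))
    (at_left (real m))"
proof -
  define lower where
    "lower s = (1 - (real m - s)\<^sup>2 / 12) ^ m * ((real m - s) powr (real m - s))\<^sup>2 / 2 ^ (m + 1)" for s
  define upper where "upper s = 1 / 2 ^ (m + 1) + (real m - s) * 2 ^ m / (2 * s)" for s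
  have near: "\<forall>\<^sub>F s in at_left (real m). s \<in> {max 0 (real m - 1)<..<real m}"
    using assms by (intro eventually_at_left_real) auto
  then have "\<forall>\<^sub>F s in at_left (real m).
      lower s \<le> (real m - s) * enn2real (cos_kernel_integral m s)
      \<and> (real m - s) * enn2real (cos_kernel_integral m s) \<le> upper s"
  proof eventually_elim
    case (elim s)
    then have "(real m - s)\<^sup>2 \<le> 12"
      using power_mono[of "real m - s" 1 2] by simp
    with elim show ?case
      unfolding lower_def upper_def by (intro conjI cos_kernel_integral_bounds) auto
  qed
  moreover have "(lower \<longlongrightarrow> 1 / 2 ^ (m + 1)) (at_left (real m))"
  proof -
    have q: "((\<lambda>s. real m - s) \<longlongrightarrow> 0) (at_left (real m))"
      by (auto intro!: tendsto_eq_intros)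
    moreover have "\<forall>\<^sub>F s in at_left (real m). real m - s > 0"
      using near by eventually_elim auto
    ultimately have "filterlim (\<lambda>s. real m - s) (at_right 0) (at_left (real m))"
      by (rule tendsto_imp_filterlim_at_right)
    then have p: "((\<lambda>s. (real m - s) powr (real m - s)) \<longlongrightarrow> 1) (at_left (real m))"
      by (rule filterlim_compose[OF tendsto_powr_self_at_right_0])
    have "(lower \<longlongrightarrow> (1 - 0\<^sup>2 / 12) ^ m * 1\<^sup>2 / 2 ^ (m + 1)) (at_left (real m))"
      unfolding lower_def
      by (intro p q tendsto_divide tendsto_mult tendsto_power tendsto_diff tendsto_const) simp_all
    then show ?thesis
      by simp
  qed
  moreover have "(upper \<longlongrightarrow> 1 / 2 ^ (m + 1)) (at_left (real m))"
    unfolding upper_def using assms by (intro tendsto_eq_intros) auto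
  ultimately show ?thesis
    unfolding eventually_conj_iff by (blast intro: tendsto_sandwich)
qed

lemma
  assumes "borel_prob_on_sphere (\<sigma> :: 'a::euclidean_space measure)"
  shows prob_space_borel_prob_on_sphere: "prob_space \<sigma>"
    and space_borel_prob_on_sphere: "space \<sigma> = unit_sphere"
    and borel_measurable_borel_prob_on_sphere:
      "f \<in> borel_measurable borel \<Longrightarrow> f \<in> borel_measurable \<sigma>"
proof -
  have sets: "sets \<sigma> = sets (restrict_space borel (unit_sphere :: 'a set))"
    using assms by (simp add: borel_prob_on_sphere_def)
  show "prob_space \<sigma>"
    using assms by (simp add: borel_prob_on_sphere_def)
  show "space \<sigma> = unit_sphere"
    using sets_eq_imp_space_eq[OF sets] by (simp add: space_restrict_space)
  show "f \<in> borel_measurable \<sigma>" if "f \<in> borel_measurable borel"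
    using that by (subst measurable_cong_sets[OF sets refl]) (rule measurable_restrict_space1)
qed

lemma nn_integral_nu_meas:
  fixes \<sigma> :: "'a::euclidean_space measure"
  assumes \<sigma>: "borel_prob_on_sphere \<sigma>" and f: "f \<in> borel_measurable borel"
  shows "(\<integral>\<^sup>+ y. f y \<partial>nu_meas s \<sigma>) = (\<integral>\<^sup>+ \<theta>. (\<integral>\<^sup>+ r. f (r *\<^sub>R \<theta>) \<partial>radial_measure s) \<partial>\<sigma>)"
proof -
  interpret \<sigma>: prob_space \<sigma>
    using \<sigma> by (rule prob_space_borel_prob_on_sphere)
  interpret radial: sigma_finite_measure "radial_measure s"
    by (rule sigma_finite_radial_measure)
  interpret pair_sigma_finite "radial_measure s" \<sigma> ..
  have "(\<lambda>(r, \<theta>). r *\<^sub>R \<theta>) \<in> borel_measurable (radial_measure s \<Otimes>\<^sub>M \<sigma>)"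
    using borel_measurable_radial_measure[of "\<lambda>r. r"] borel_measurable_borel_prob_on_sphere[OF \<sigma>, of "\<lambda>\<theta>. \<theta>"]
    by (auto simp: case_prod_beta' intro!: borel_measurable_scaleR measurable_compose[OF measurable_fst]
        measurable_compose[OF measurable_snd])
  then show ?thesis
    using f unfolding nu_meas_eq_distr_radial_measure
    by (simp add: nn_integral_distr nn_integral_snd[symmetric] case_prod_beta')
qed

lemma integrable_abs_inner_powr:
  fixes \<sigma> :: "'a::euclidean_space measure"
  assumes \<sigma>: "borel_prob_on_sphere \<sigma>" and s: "0 \<le> s"
  shows "integrable \<sigma> (\<lambda>\<theta>. \<bar>e \<bullet> \<theta>\<bar> powr (2 * s))"
proof -
  interpret prob_space \<sigma>
    using \<sigma> by (rule prob_space_borel_prob_on_sphere)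
  show ?thesis
  proof (rule integrable_const_bound[where B = "norm e powr (2 * s)"])
    show "AE \<theta> in \<sigma>. norm (\<bar>e \<bullet> \<theta>\<bar> powr (2 * s)) \<le> norm e powr (2 * s)"
    proof (rule AE_I2)
      fix \<theta> assume "\<theta> \<in> space \<sigma>"
      then have "\<bar>e \<bullet> \<theta>\<bar> \<le> norm e"
        using Cauchy_Schwarz_ineq2[of e \<theta>] space_borel_prob_on_sphere[OF \<sigma>] by simp
      then show "norm (\<bar>e \<bullet> \<theta>\<bar> powr (2 * s)) \<le> norm e powr (2 * s)"
        using s by (simp add: powr_mono2)
    qed
  qed (rule borel_measurable_borel_prob_on_sphere[OF \<sigma>], measurable)
qed

lemma integral_nu_meas_one_minus_cos:
  fixes \<sigma> :: "'a::euclidean_space measure"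
  assumes \<sigma>: "borel_prob_on_sphere \<sigma>" and m: "m \<ge> 1" and s: "0 \<le> s"
  shows "(\<integral> y. (1 - cos (e \<bullet> y)) ^ m \<partial>nu_meas s \<sigma>) = enn2real (cos_kernel_integral m s) * M_fun s \<sigma> e"
proof -
  have "(\<integral>\<^sup>+ y. ennreal ((1 - cos (e \<bullet> y)) ^ m) \<partial>nu_meas s \<sigma>)
      = (\<integral>\<^sup>+ \<theta>. ennreal (\<bar>e \<bullet> \<theta>\<bar> powr (2 * s)) * cos_kernel_integral m s \<partial>\<sigma>)"
    using m by (simp add: nn_integral_nu_meas[OF \<sigma>] nn_integral_radial_measure_one_minus_cos)
  also have "\<dots> = ennreal (M_fun s \<sigma> e) * cos_kernel_integral m s"
    using integrable_abs_inner_powr[OF \<sigma> s, of e] borel_measurable_borel_prob_on_sphere[OF \<sigma>]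
    by (simp add: nn_integral_multc M_fun_def nn_integral_eq_integral)
  moreover have "(\<integral> y. (1 - cos (e \<bullet> y)) ^ m \<partial>nu_meas s \<sigma>)
      = enn2real (\<integral>\<^sup>+ y. ennreal ((1 - cos (e \<bullet> y)) ^ m) \<partial>nu_meas s \<sigma>)"
    by (rule integral_eq_nn_integral) (auto simp: nu_meas_eq_distr_radial_measure)
  moreover have "0 \<le> M_fun s \<sigma> e"
    unfolding M_fun_def by simp
  ultimately show ?thesis
    by (simp add: enn2real_mult mult.commute)
qed

lemma M_fun_pos_at_maximum:
  fixes \<sigma> :: "'a::euclidean_space measure"
  assumes \<sigma>: "borel_prob_on_sphere \<sigma>" and s: "0 \<le> s"
    and max: "\<And>e'. e' \<in> unit_sphere \<Longrightarrow> M_fun s \<sigma> e' \<le> M_fun s \<sigma> e"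
  shows "0 < M_fun s \<sigma> e"
proof (rule ccontr)
  assume "\<not> 0 < M_fun s \<sigma> e"
  interpret prob_space \<sigma>
    using \<sigma> by (rule prob_space_borel_prob_on_sphere)
  have "AE \<theta> in \<sigma>. b \<bullet> \<theta> = 0" if b: "b \<in> Basis" for b :: 'a
  proof -
    have "M_fun s \<sigma> b \<le> 0"
      using max[of b] b \<open>\<not> 0 < M_fun s \<sigma> e\<close> by simp
    moreover have "0 \<le> M_fun s \<sigma> b"
      unfolding M_fun_def by simp
    ultimately have "M_fun s \<sigma> b = 0"
      by simp
    then show ?thesis
      using integral_nonneg_eq_0_iff_AE[OF integrable_abs_inner_powr[OF \<sigma> s]] by (simp add: M_fun_def)
  qed
  then have "AE \<theta> in \<sigma>. \<forall>b\<in>Basis. b \<bullet> \<theta> = 0"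
    by (intro eventually_ball_finite) auto
  moreover have "AE \<theta> in \<sigma>. \<theta> \<in> unit_sphere"
    using space_borel_prob_on_sphere[OF \<sigma>] by (intro AE_I2) simp
  ultimately have "AE \<theta> in \<sigma>. False"
    by eventually_elim (auto simp: euclidean_all_zero_iff inner_commute)
  then show False
    by simp
qed

theorem lemma3p9:
  fixes m :: nat
    and \<sigma> :: "real \<Rightarrow> 'a::euclidean_space measure"
    and e :: "real \<Rightarrow> 'a"
  assumes "m \<ge> 1"
    and "\<And>s. s \<in> {0<..<real m} \<Longrightarrow> borel_prob_on_sphere (\<sigma> s)"
    and "\<And>s. s \<in> {0<..<real m} \<Longrightarrow> e s \<in> unit_sphere"
    and "\<And>s e'. s \<in> {0<..<real m} \<Longrightarrow> e' \<in> unit_sphere \<Longrightarrow>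
           M_fun s (\<sigma> s) e' \<le> M_fun s (\<sigma> s) (e s)"
  shows "((\<lambda>s. c_const m s (\<sigma> s) (e s) / (real m - s) * M_fun s (\<sigma> s) (e s))
           \<longlongrightarrow> 4) (at_left (real m))"
proof -
  \<comment> \<open>Maximality of \<open>e s\<close> is only needed for \<open>M_fun s (\<sigma> s) (e s) > 0\<close>.\<close>
  let ?K = "\<lambda>s. enn2real (cos_kernel_integral m s)"
  have "0 < real m"
    using assms(1) by simp
  have "((\<lambda>s. 2 / (2 ^ m * ((real m - s) * ?K s))) \<longlongrightarrow> 2 / (2 ^ m * (1 / 2 ^ (m + 1)))) (at_left (real m))"
    by (intro tendsto_intros tendsto_cos_kernel_integral assms(1)) simp
  moreover have "\<forall>\<^sub>F s in at_left (real m).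
      2 / (2 ^ m * ((real m - s) * ?K s)) = c_const m s (\<sigma> s) (e s) / (real m - s) * M_fun s (\<sigma> s) (e s)"
    using eventually_at_left_real[OF \<open>0 < real m\<close>]
  proof eventually_elim
    case (elim s)
    then have "0 < M_fun s (\<sigma> s) (e s)"
      by (intro M_fun_pos_at_maximum assms(2,4)) auto
    with elim show ?case
      using assms(2)[OF elim] by (simp add: c_const_def integral_nu_meas_one_minus_cos assms(1))
  qed
  ultimately show ?thesis
    by (simp add: tendsto_cong power_Suc)
qed

end
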